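(* Let $\beta>0$ and let $A$ be a real random variable with $\Pr(0\le A<a_{\max})=1$ for some $a_{\max}>0$. Let $\eta\in(0,1]$ be the solution of $\beta=\dfrac{1-\eta}{1-\mathbb E\{1/(1+\eta A)\}}$. If $\beta\,\mathbb E\Big\{\dfrac{\eta A}{1+\eta A}\Big\}<\dfrac12$, then $$\Psi(A,\beta)\le \beta\log(1+a_{\max})+\log e\cdot\Big(\beta\,\frac{a_{\max}}{1+a_{\max}}\Big)^2.$$
   Context: Logarithms are base 2. For a nonnegative real random variable $A$ and $\beta>0$, $\Psi(A,\beta)=\beta\,\mathbb E\{\log(1+\eta A)\}-\log\eta+(\eta-1)\log e$, where $\eta\in(0,1]$ is the solution of $\beta=\dfrac{1-\eta}{1-\mathbb E\{1/(1+\eta A)\}}$ (equivalently $\eta=1-\beta\,\mathbb E\{\eta A/(1+\eta A)\}$). *)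

theory Defs
  imports "HOL-Probability.Probability"
begin

definition Psi_at :: "'a measure \<Rightarrow> ('a \<Rightarrow> real) \<Rightarrow> real \<Rightarrow> real \<Rightarrow> real" where
  "Psi_at M A \<beta> \<eta> =
     \<beta> * prob_space.expectation M (\<lambda>x. log 2 (1 + \<eta> * A x)) - log 2 \<eta>
     + (\<eta> - 1) * log 2 (exp 1)"

end

theory Submission
  imports Defs
begin

text \<open>Writing \<open>m = E{\<eta>A/(1+\<eta>A)}\<close>, the defining equation of \<open>\<eta>\<close> says exactly
  \<open>1 - \<eta> = \<beta> m\<close>, because \<open>1/(1+\<eta>A) = 1 - \<eta>A/(1+\<eta>A)\<close>. Hence \<open>t = 1 - \<eta>\<close> lies in
  \<open>[0, 1/2)\<close>, and on that range \<open>-ln(1-t) - t \<le> t\<^sup>2\<close> bounds the term \<open>-log \<eta> + (\<eta>-1) log e\<close>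
  by \<open>log e \<cdot> t\<^sup>2\<close>. Finally \<open>x/(1+x)\<close> and \<open>log(1+x)\<close> are increasing, so \<open>t = \<beta> m\<close> and
  \<open>E{log(1+\<eta>A)}\<close> are bounded by their values at \<open>\<eta>A = a\<^sub>m\<^sub>a\<^sub>x\<close>.\<close>

lemma minus_ln_one_minus_le:
  fixes t :: real
  assumes "0 \<le> t" "t \<le> 1/2"
  shows "- ln (1 - t) - t \<le> t\<^sup>2"
proof -
  define g where "g s = s\<^sup>2 + s + ln (1 - s)" for s :: real
  have g_deriv: "DERIV g s :> s * (1 - 2 * s) / (1 - s)" if "s \<le> 1/2" for s
  proof -
    have "DERIV g s :> 2 * s + 1 - 1 / (1 - s)"
      unfolding g_def using that by (auto intro!: derivative_eq_intros simp: power2_eq_square)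
    moreover have "2 * s + 1 - 1 / (1 - s) = s * (1 - 2 * s) / (1 - s)"
      using that by (simp add: field_simps)
    ultimately show ?thesis by simp
  qed
  have "g 0 \<le> g t"
  proof (rule DERIV_nonneg_imp_nondecreasing[OF \<open>0 \<le> t\<close>])
    fix s assume "0 \<le> s" "s \<le> t"
    with assms have "DERIV g s :> s * (1 - 2 * s) / (1 - s)" "0 \<le> s * (1 - 2 * s) / (1 - s)"
      by (auto intro!: g_deriv)
    then show "\<exists>y. DERIV g s :> y \<and> 0 \<le> y" by blast
  qed
  then show ?thesis by (simp add: g_def)
qed

lemma minus_log_one_minus_le:
  fixes t :: real
  assumes "0 \<le> t" "t \<le> 1/2"
  shows "- log 2 (1 - t) - t * log 2 (exp 1) \<le> log 2 (exp 1) * t\<^sup>2"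
proof -
  have "(- ln (1 - t) - t) / ln 2 \<le> t\<^sup>2 / ln 2"
    using minus_ln_one_minus_le[OF assms] by (simp add: divide_right_mono)
  then show ?thesis by (simp add: log_def diff_divide_distrib)
qed

lemma frac_one_plus_mono:
  fixes x c :: real
  assumes "0 \<le> x" "x \<le> c"
  shows "x / (1 + x) \<le> c / (1 + c)"
  using assms by (simp add: divide_simps algebra_simps)

context prob_space
begin

lemma integrable_frac_one_plus:
  fixes a :: "'a \<Rightarrow> real"
  assumes [measurable]: "a \<in> borel_measurable M"
    and nonneg: "AE x in M. 0 \<le> a x"
  shows "integrable M (\<lambda>x. a x / (1 + a x))"
  by (rule integrable_const_bound[where B = 1]) (use nonneg in \<open>auto elim!: eventually_mono\<close>)

lemma expectation_frac_one_plus_le: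
  fixes a :: "'a \<Rightarrow> real" and c :: real
  assumes [measurable]: "a \<in> borel_measurable M"
    and bounds: "AE x in M. 0 \<le> a x \<and> a x \<le> c"
  shows "expectation (\<lambda>x. a x / (1 + a x)) \<le> c / (1 + c)"
proof (rule integral_le_const)
  show "integrable M (\<lambda>x. a x / (1 + a x))"
    using bounds by (auto intro: integrable_frac_one_plus elim: eventually_mono)
  show "AE x in M. a x / (1 + a x) \<le> c / (1 + c)"
    using bounds by eventually_elim (simp add: frac_one_plus_mono)
qed

lemma expectation_inverse_one_plus:
  fixes a :: "'a \<Rightarrow> real"
  assumes [measurable]: "a \<in> borel_measurable M"
    and nonneg: "AE x in M. 0 \<le> a x"
  shows "expectation (\<lambda>x. 1 / (1 + a x)) = 1 - expectation (\<lambda>x. a x / (1 + a x))"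
proof -
  have "expectation (\<lambda>x. 1 / (1 + a x)) = expectation (\<lambda>x. 1 - a x / (1 + a x))"
    by (rule integral_cong_AE) (use nonneg in \<open>auto elim!: eventually_mono simp: field_simps\<close>)
  also have "\<dots> = 1 - expectation (\<lambda>x. a x / (1 + a x))"
    using integrable_frac_one_plus[OF assms] by (simp add: prob_space)
  finally show ?thesis .
qed

lemma expectation_log_one_plus_le:
  fixes a :: "'a \<Rightarrow> real" and c :: real
  assumes [measurable]: "a \<in> borel_measurable M"
    and bounds: "AE x in M. 0 \<le> a x \<and> a x \<le> c"
  shows "expectation (\<lambda>x. log 2 (1 + a x)) \<le> log 2 (1 + c)"
proof -
  have pointwise: "AE x in M. 0 \<le> log 2 (1 + a x) \<and> log 2 (1 + a x) \<le> log 2 (1 + c)"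
    using bounds by eventually_elim simp
  have "integrable M (\<lambda>x. log 2 (1 + a x))"
    by (rule integrable_const_bound[where B = "log 2 (1 + c)"])
       (use pointwise in \<open>auto elim: eventually_mono\<close>)
  then show ?thesis
    using pointwise by (auto intro!: integral_le_const elim!: eventually_mono)
qed

end

theorem mainTheorem11:
  fixes M :: "'a measure" and A :: "'a \<Rightarrow> real" and \<beta> \<eta> amax :: real
  assumes "prob_space M"
    and "A \<in> borel_measurable M"
    and "\<beta> > 0"
    and "amax > 0"
    and "AE x in M. 0 \<le> A x \<and> A x < amax"
    and "0 < \<eta>" and "\<eta> \<le> 1"
    and "\<beta> = (1 - \<eta>) / (1 - prob_space.expectation M (\<lambda>x. 1 / (1 + \<eta> * A x)))"
    and "\<beta> * prob_space.expectation M (\<lambda>x. \<eta> * A x / (1 + \<eta> * A x)) < 1 / 2"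
  shows "Psi_at M A \<beta> \<eta> \<le>
           \<beta> * log 2 (1 + amax) + log 2 (exp 1) * (\<beta> * amax / (1 + amax))^2"
proof -
  interpret prob_space M by fact
  have a_meas: "(\<lambda>x. \<eta> * A x) \<in> borel_measurable M" using assms(2) by measurable
  have a_bounds: "AE x in M. 0 \<le> \<eta> * A x \<and> \<eta> * A x \<le> amax"
    using assms(5) by eventually_elim (use assms(6,7) mult_right_mono[of \<eta> 1] in force)
  define m where "m = expectation (\<lambda>x. \<eta> * A x / (1 + \<eta> * A x))"
  have "\<beta> = (1 - \<eta>) / m"
    using assms(8) expectation_inverse_one_plus[OF a_meas] a_bounds
    by (auto simp: m_def elim!: eventually_mono)
  with \<open>\<beta> > 0\<close> have t_eq: "1 - \<eta> = \<beta> * m" by (cases "m = 0") auto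
  have "1 - \<eta> \<le> \<beta> * amax / (1 + amax)"
    using t_eq mult_left_mono[OF expectation_frac_one_plus_le[OF a_meas a_bounds, folded m_def], of \<beta>] \<open>\<beta> > 0\<close> by simp
  then have t_sq: "(1 - \<eta>)\<^sup>2 \<le> (\<beta> * amax / (1 + amax))\<^sup>2"
    using \<open>\<eta> \<le> 1\<close> by (simp add: power_mono)
  have "0 \<le> 1 - \<eta>" "1 - \<eta> \<le> 1/2"
    using t_eq assms(7,9) by (simp_all add: m_def)
  from minus_log_one_minus_le[OF this]
  have "- log 2 \<eta> + (\<eta> - 1) * log 2 (exp 1) \<le> log 2 (exp 1) * (1 - \<eta>)\<^sup>2"
    using mult_minus_left[of "1 - \<eta>" "log 2 (exp 1)"] by simp
  moreover have "\<beta> * expectation (\<lambda>x. log 2 (1 + \<eta> * A x)) \<le> \<beta> * log 2 (1 + amax)"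
    using expectation_log_one_plus_le[OF a_meas a_bounds] \<open>\<beta> > 0\<close> by simp
  moreover have "log 2 (exp 1) * (1 - \<eta>)\<^sup>2 \<le> log 2 (exp 1) * (\<beta> * amax / (1 + amax))\<^sup>2"
    using t_sq by (simp add: divide_right_mono)
  ultimately show ?thesis unfolding Psi_at_def by linarith
qed

end
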